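(* Let $\epsilon\in(0,1)$ and let $W=[w_1,\dots,w_n]$ be a mass vector ($w_i\ge0$, $\sum_i w_i=1$) such that for every $\theta\in\Theta$ and every $\lambda\in[\kappa(\theta),\tau(\theta)]$, $$(1-\epsilon)H(\theta,\lambda)\le \tilde H(\theta,\lambda)\le (1+\epsilon)H(\theta,\lambda).$$ Then with $\tilde{\mathbb P}_n=\sum_i w_i\delta_{\xi_i}$ we have, for every $\theta\in\Theta$, $$(1-\epsilon)R^{\mathbb P_n}_{\sigma,p}(\theta)\le R^{\tilde{\mathbb P}_n}_{\sigma,p}(\theta)\le (1+\epsilon)R^{\mathbb P_n}_{\sigma,p}(\theta).$$
   Context: Setting: $\Xi=\mathbb X\times\mathbb Y$ with $\mathbb X\subseteq\mathbb R^m$, $\mathbb Y\subseteq\mathbb R$, metric $\mathtt d((x,y),(x',y'))=\|x-x'\|+\frac{\gamma}{2}|y-y'|$ ($\|\cdot\|$ a norm on $\mathbb R^m$, $\gamma>0$), $(\Xi,\mathtt d)$ complete. Fix $p\ge1$, $\sigma>0$, data $\xi_1,\dots,\xi_n\in\Xi$ with empirical distribution $\mathbb P_n=\frac1n\sum_i\delta_{\xi_i}$. Loss $\ell:\mathbb R^d\times\Xi\to[0,\infty)$, feasible set $\Theta\subseteq\mathbb R^d$. Assumption: $\ell(\theta,\cdot)$ continuous for each $\theta\in\Theta$, and there are a positive continuous $\mathtt C(\theta)$ and $\xi_0\in\Xi$ with $\ell(\theta,\xi)\le\mathtt C(\theta)(1+\mathtt d^p(\xi,\xi_0))$. The $p$-Wasserstein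 distance is $W_p(\mathbb P,\mathbb P')=(\inf_{\pi\in\Pi(\mathbb P,\mathbb P')}\int\mathtt d^p(\xi,\xi')\,\pi(d\xi,d\xi'))^{1/p}$; $\mathbb B_{\sigma,p}(\mathbb Q)$ is the set of Borel probability measures on $\Xi$ at $W_p$-distance at most $\sigma$ from $\mathbb Q$; the worst-case risk is $R^{\mathbb Q}_{\sigma,p}(\theta)=\sup_{\mathbb Q'\in\mathbb B_{\sigma,p}(\mathbb Q)}\mathbb E^{\mathbb Q'}[\ell(\theta,\xi)]$. Define $h(\theta,\lambda,\xi)=\sup_{\zeta\in\Xi}\{\ell(\theta,\zeta)-\lambda\mathtt d^p(\zeta,\xi)\}$, $h_i(\theta,\lambda)=h(\theta,\lambda,\xi_i)$, $H(\theta,\lambda)=\frac1n\sum_ih_i(\theta,\lambda)$, $\tilde H(\theta,\lambda)=\sum_iw_ih_i(\theta,\lambda)$. Known strong duality (used as a standing fact): for any distribution $\mathbb Q$ with finite $p$-th moment, $R^{\mathbb Q}_{\sigma,p}(\theta)=\inf_{\lambda\ge0}\{\lambda\sigma^p+\mathbb E^{\mathbb Q}[h(\theta,\lambda,\xi)]\}$. Define $\kappa(\theta)=\limsup_{\mathtt d(\xi,\xi_0)\to\infty}\frac{\ell(\theta,\xi)-\ell(\theta,\xi_0)}{\mathtt d^p(\xi,\xi_0)}$; it is assumed that $h_i(\theta,\kappa(\theta))<\infty$ for all $i,\theta$ (and $h_i(\theta,\lambda)=\infty$ for $\lambda<\kappa(\theta)$). Let $\rho=\max_i\mathtt d(\xi_i,\xi_0)$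 and $\tau(\theta)=\mathtt C(\theta)(2^{p-1}+\frac{1+2^{p-1}\rho^p}{\sigma^p})$. *)

theory Defs
  imports "HOL-Probability.Probability"
begin

definition dxi :: "(real^'m \<Rightarrow> real) \<Rightarrow> real \<Rightarrow> ((real^'m) \<times> real) \<Rightarrow> ((real^'m) \<times> real) \<Rightarrow> real" where
  "dxi nrm \<gamma> a b = nrm (fst a - fst b) + \<gamma> / 2 * \<bar>snd a - snd b\<bar>"

definition is_norm :: "(real^'m \<Rightarrow> real) \<Rightarrow> bool" where
  "is_norm nrm \<longleftrightarrow> (\<forall>x. nrm x = 0 \<longleftrightarrow> x = 0) \<and> (\<forall>c x. nrm (c *\<^sub>R x) = \<bar>c\<bar> * nrm x)
     \<and> (\<forall>x y. nrm (x + y) \<le> nrm x + nrm y)"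

definition complete_wrt :: "'a set \<Rightarrow> ('a \<Rightarrow> 'a \<Rightarrow> real) \<Rightarrow> bool" where
  "complete_wrt S d \<longleftrightarrow> (\<forall>s::nat \<Rightarrow> 'a. (\<forall>k. s k \<in> S) \<longrightarrow>
      (\<forall>e::real>0. \<exists>N. \<forall>a\<ge>N. \<forall>b\<ge>N. d (s a) (s b) < e) \<longrightarrow>
      (\<exists>x\<in>S. \<forall>e::real>0. \<exists>N. \<forall>k\<ge>N. d (s k) x < e))"

definition continuous_wrt :: "'a set \<Rightarrow> ('a \<Rightarrow> 'a \<Rightarrow> real) \<Rightarrow> ('a \<Rightarrow> real) \<Rightarrow> bool" where
  "continuous_wrt S d f \<longleftrightarrow> (\<forall>x\<in>S. \<forall>e::real>0. \<exists>\<delta>::real>0. \<forall>z\<in>S. d z x < \<delta> \<longrightarrow> \<bar>f z - f x\<bar> < e)"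

text \<open>Borel probability measures on Xi (represented on the ambient space, concentrated on Xi).\<close>
definition prob_on :: "'a::topological_space set \<Rightarrow> 'a measure \<Rightarrow> bool" where
  "prob_on S Q \<longleftrightarrow> prob_space Q \<and> sets Q = sets borel \<and> emeasure Q S = 1"

definition couplings :: "'a::topological_space measure \<Rightarrow> 'a measure \<Rightarrow> ('a \<times> 'a) measure set" where
  "couplings P P' = {\<pi>. prob_space \<pi> \<and> sets \<pi> = sets (borel \<Otimes>\<^sub>M borel)
      \<and> distr \<pi> borel fst = P \<and> distr \<pi> borel snd = P'}"

definition wass :: "('a::topological_space \<Rightarrow> 'a \<Rightarrow> real) \<Rightarrow> real \<Rightarrow> 'a measure \<Rightarrow> 'a measure \<Rightarrow> ennreal" where
  "wass d p P P' = (let c = (INF \<pi>\<in>couplings P P'. \<integral>\<^sup>+ z. ennreal (d (fst z) (snd z) powr p) \<partial>\<pi>)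
      in if c = \<infinity> then \<infinity> else ennreal (enn2real c powr (1 / p)))"

definition wball :: "'a::topological_space set \<Rightarrow> ('a \<Rightarrow> 'a \<Rightarrow> real) \<Rightarrow> real \<Rightarrow> real \<Rightarrow> 'a measure \<Rightarrow> 'a measure set" where
  "wball S d p \<sigma> Q = {Q'. prob_on S Q' \<and> wass d p Q Q' \<le> ennreal \<sigma>}"

definition risk :: "'a::topological_space set \<Rightarrow> ('a \<Rightarrow> 'a \<Rightarrow> real) \<Rightarrow> real \<Rightarrow> real \<Rightarrow> 'a measure \<Rightarrow> ('a \<Rightarrow> real) \<Rightarrow> ereal" where
  "risk S d p \<sigma> Q f = (SUP Q'\<in>wball S d p \<sigma> Q. enn2ereal (\<integral>\<^sup>+ x. ennreal (f x) \<partial>Q'))"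

definition hfun :: "'a set \<Rightarrow> ('a \<Rightarrow> 'a \<Rightarrow> real) \<Rightarrow> real \<Rightarrow> ('a \<Rightarrow> real) \<Rightarrow> real \<Rightarrow> 'a \<Rightarrow> ereal" where
  "hfun S d p f lam xi = (SUP \<zeta>\<in>S. ereal (f \<zeta> - lam * d \<zeta> xi powr p))"

text \<open>kappa = limsup_{d(xi,xi0) \<rightarrow> \<infinity>, xi in Xi} (f xi - f xi0) / d^p(xi, xi0).\<close>
definition kappa :: "'a set \<Rightarrow> ('a \<Rightarrow> 'a \<Rightarrow> real) \<Rightarrow> real \<Rightarrow> ('a \<Rightarrow> real) \<Rightarrow> 'a \<Rightarrow> ereal" where
  "kappa S d p f xi0 = Limsup (INF r::real. principal {xi\<in>S. r < d xi xi0})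
      (\<lambda>xi. ereal ((f xi - f xi0) / d xi xi0 powr p))"

definition wmeas :: "(nat \<Rightarrow> 'a::topological_space) \<Rightarrow> (nat \<Rightarrow> real) \<Rightarrow> nat \<Rightarrow> 'a measure" where
  "wmeas xs w n = measure_of UNIV (sets borel) (\<lambda>A. \<Sum>i<n. ennreal (w i) * indicator A (xs i))"

end

theory Submission imports Defs begin

text \<open>By strong duality both worst-case risks are infima over \<open>\<lambda> \<ge> 0\<close> of \<open>\<lambda>\<sigma>\<^sup>p\<close> plus the
  uniform, resp. \<open>w\<close>-weighted, average of the \<open>h\<^sub>i(\<theta>,\<lambda>)\<close>. Below \<open>\<kappa>\<close> every \<open>h\<^sub>i\<close> is infinite. At
  \<open>\<lambda>\<^sub>0 = C 2\<^sup>p\<^sup>-\<^sup>1\<close> the growth bound gives \<open>h\<^sub>i(\<lambda>\<^sub>0) \<le> C (1 + 2\<^sup>p\<^sup>-\<^sup>1\<rho>\<^sup>p)\<close>, so both objectives are at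
  most \<open>\<tau>\<sigma>\<^sup>p\<close> there, while beyond \<open>\<tau>\<close> they exceed \<open>\<tau>\<sigma>\<^sup>p\<close>. Hence both infima may be taken over
  \<open>[\<kappa>, \<tau>]\<close>, where the coreset inequalities pass to the objectives because \<open>\<lambda>\<sigma>\<^sup>p \<ge> 0\<close>.\<close>

lemma sets_wmeas [simp]: "sets (wmeas xs w n) = sets borel"
  unfolding wmeas_def using sets.sigma_sets_eq[of borel] by (simp add: sets_measure_of_conv)

lemma space_wmeas [simp]: "space (wmeas xs w n) = UNIV"
  unfolding wmeas_def by (rule space_measure_of) auto

lemma emeasure_wmeas:
  assumes "A \<in> sets borel"
  shows "emeasure (wmeas xs w n) A = (\<Sum>i<n. ennreal (w i) * indicator A (xs i))"
  unfolding wmeas_def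
proof (rule emeasure_measure_of_sigma[OF _ _ _ assms])
  show "sigma_algebra UNIV (sets borel)"
    using sets.sigma_algebra_axioms[of borel] by simp
  show "positive (sets borel) (\<lambda>A. \<Sum>i<n. ennreal (w i) * indicator A (xs i))"
    unfolding positive_def by simp
  show "countably_additive (sets borel) (\<lambda>A. \<Sum>i<n. ennreal (w i) * indicator A (xs i))"
    unfolding countably_additive_def
  proof (intro allI impI)
    fix A :: "nat \<Rightarrow> 'a set" assume "range A \<subseteq> sets borel" "disjoint_family A"
    have "(\<Sum>j. \<Sum>i<n. ennreal (w i) * indicator (A j) (xs i))
        = (\<Sum>i<n. \<Sum>j. ennreal (w i) * indicator (A j) (xs i))"
      by (rule suminf_sum) auto
    also have "\<dots> = (\<Sum>i<n. ennreal (w i) * (\<Sum>j. indicator (A j) (xs i)))"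
      by (simp add: ennreal_suminf_cmult)
    also have "\<dots> = (\<Sum>i<n. ennreal (w i) * indicator (\<Union>j. A j) (xs i))"
      using suminf_indicator[OF \<open>disjoint_family A\<close>] by simp
    finally show "(\<Sum>j. \<Sum>i<n. ennreal (w i) * indicator (A j) (xs i))
        = (\<Sum>i<n. ennreal (w i) * indicator (\<Union>(range A)) (xs i))" .
  qed
qed

lemma nn_integral_wmeas:
  fixes xs :: "nat \<Rightarrow> 'a::t1_space"
  shows "(\<integral>\<^sup>+x. f x \<partial>wmeas xs w n) = (\<Sum>i<n. ennreal (w i) * f (xs i))"
proof -
  define S where "S = xs ` {..<n}"
  have "finite S" unfolding S_def by simp
  define g where "g x = (\<Sum>y\<in>S. f y * indicator {y} x)" for x
  have g_eq: "g x = f x" if "x \<in> S" for x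
  proof -
    have "g x = (\<Sum>y\<in>S. if y = x then f y else 0)"
      unfolding g_def by (rule sum.cong) (auto simp: indicator_def)
    also have "\<dots> = f x" using \<open>finite S\<close> that by simp
    finally show ?thesis .
  qed
  have "UNIV - S \<in> sets borel"
    using finite_imp_closed[OF \<open>finite S\<close>] by (auto intro: borel_open)
  moreover have "emeasure (wmeas xs w n) (UNIV - S) = 0"
    using calculation by (simp add: emeasure_wmeas S_def)
  ultimately have "AE x in wmeas xs w n. x \<in> S"
    by (intro AE_I'[of "UNIV - S"]) auto
  then have "AE x in wmeas xs w n. f x = g x" by eventually_elim (simp add: g_eq)
  then have "(\<integral>\<^sup>+x. f x \<partial>wmeas xs w n) = (\<integral>\<^sup>+x. g x \<partial>wmeas xs w n)"
    by (rule nn_integral_cong_AE)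
  also have "\<dots> = (\<Sum>y\<in>S. \<integral>\<^sup>+x. f y * indicator {y} x \<partial>wmeas xs w n)"
    unfolding g_def by (rule nn_integral_sum) (simp add: measurable_cong_sets[OF sets_wmeas refl])
  also have "\<dots> = (\<Sum>y\<in>S. f y * (\<Sum>i<n. ennreal (w i) * indicator {y} (xs i)))"
    by (intro sum.cong refl) (simp add: nn_integral_cmult_indicator emeasure_wmeas)
  also have "\<dots> = (\<Sum>i<n. ennreal (w i) * g (xs i))"
    unfolding g_def sum_distrib_left by (subst sum.swap) (simp add: mult_ac)
  also have "\<dots> = (\<Sum>i<n. ennreal (w i) * f (xs i))"
    by (intro sum.cong refl) (simp add: g_eq S_def)
  finally show ?thesis .
qed

lemma nn_integral_wmeas_ereal:
  fixes xs :: "nat \<Rightarrow> 'a::t1_space" and h :: "'a \<Rightarrow> ereal"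
  assumes "\<forall>i<n. w i \<ge> 0" "\<forall>i<n. h (xs i) \<ge> 0"
  shows "enn2ereal (\<integral>\<^sup>+x. e2ennreal (h x) \<partial>wmeas xs w n) = (\<Sum>i<n. ereal (w i) * h (xs i))"
proof -
  have "enn2ereal (\<integral>\<^sup>+x. e2ennreal (h x) \<partial>wmeas xs w n)
     = (\<Sum>i<n. enn2ereal (ennreal (w i) * e2ennreal (h (xs i))))"
    by (simp add: nn_integral_wmeas sum_enn2ereal)
  also have "\<dots> = (\<Sum>i<n. ereal (w i) * h (xs i))"
    using assms by (intro sum.cong refl) (simp add: times_ennreal.rep_eq enn2ereal_e2ennreal)
  finally show ?thesis .
qed

lemma prob_on_wmeas:
  fixes xs :: "nat \<Rightarrow> 'a::t1_space"
  assumes "\<forall>i<n. w i \<ge> 0" "(\<Sum>i<n. w i) = 1" "S \<in> sets borel" "\<forall>i<n. xs i \<in> S"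
  shows "prob_on S (wmeas xs w n)"
proof -
  have one: "emeasure (wmeas xs w n) A = 1" if "A \<in> sets borel" "\<forall>i<n. xs i \<in> A" for A
  proof -
    have "emeasure (wmeas xs w n) A = (\<Sum>i<n. ennreal (w i))"
      using that by (simp add: emeasure_wmeas)
    also have "\<dots> = ennreal (\<Sum>i<n. w i)" using assms by (intro sum_ennreal) auto
    finally show ?thesis using assms by simp
  qed
  show ?thesis unfolding prob_on_def
    using one[of UNIV] one[OF assms(3,4)] by (auto intro: prob_spaceI)
qed

lemma wball_eq_empty_if_not_borel:
  assumes "S \<notin> sets borel"
  shows "wball S d p \<sigma> Q = {}"
proof -
  have False if "Q' \<in> wball S d p \<sigma> Q" for Q'
  proof -
    from that have "sets Q' = sets borel" "emeasure Q' S = 1"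
      unfolding wball_def prob_on_def by blast+
    moreover from this(1) have "emeasure Q' S = 0"
      using assms by (intro emeasure_notin_sets) simp
    ultimately show False by simp
  qed
  then show ?thesis by blast
qed

lemma mass_average_nonneg:
  fixes h :: "nat \<Rightarrow> ereal"
  assumes "\<forall>i<n. w i \<ge> 0" "\<forall>i<n. h i \<ge> 0"
  shows "0 \<le> (\<Sum>i<n. ereal (w i) * h i)"
  using assms by (intro sum_nonneg) auto

lemma mass_average_le:
  fixes h :: "nat \<Rightarrow> ereal"
  assumes "\<forall>i<n. w i \<ge> 0" "(\<Sum>i<n. w i) = 1" "\<forall>i<n. h i \<le> ereal b"
  shows "(\<Sum>i<n. ereal (w i) * h i) \<le> ereal b"
proof -
  have "(\<Sum>i<n. ereal (w i) * h i) \<le> (\<Sum>i<n. ereal (w i * b))"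
    using assms by (intro sum_mono) (simp add: ereal_mult_left_mono flip: times_ereal.simps)
  also have "\<dots> = ereal b" using assms(2) by (simp add: sum_ereal flip: sum_distrib_right)
  finally show ?thesis .
qed

lemma mass_average_eq_PInf:
  fixes h :: "nat \<Rightarrow> ereal"
  assumes "\<forall>i<n. w i \<ge> 0" "(\<Sum>i<n. w i) = 1" "\<forall>i<n. h i = \<infinity>"
  shows "(\<Sum>i<n. ereal (w i) * h i) = \<infinity>"
proof -
  obtain j where j: "j < n" "w j > 0"
  proof -
    have "\<not> (\<forall>i<n. w i \<le> 0)"
      using assms(2) sum_nonpos[of "{..<n}" w] by auto
    then show ?thesis using that by (auto simp: not_le)
  qed
  have "(\<Sum>i<n. ereal (w i) * h i) = ereal (w j) * h j + (\<Sum>i\<in>{..<n} - {j}. ereal (w i) * h i)"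
    using j by (intro sum.remove) auto
  moreover have "0 \<le> (\<Sum>i\<in>{..<n} - {j}. ereal (w i) * h i)"
    using assms by (intro sum_nonneg) auto
  ultimately show ?thesis using assms j by simp
qed

lemma is_norm_nonneg:
  assumes "is_norm nrm"
  shows "nrm x \<ge> 0"
proof -
  have "nrm (- x) = nrm x"
    using assms unfolding is_norm_def by (metis abs_minus_cancel abs_one mult_1 scaleR_minus1_left)
  moreover have "nrm (x + - x) \<le> nrm x + nrm (- x)" "nrm 0 = 0"
    using assms unfolding is_norm_def by blast+
  ultimately show ?thesis by simp
qed

lemma dxi_nonneg: "is_norm nrm \<Longrightarrow> \<gamma> \<ge> 0 \<Longrightarrow> dxi nrm \<gamma> a b \<ge> 0"
  by (simp add: dxi_def is_norm_nonneg)

lemma dxi_self: "is_norm nrm \<Longrightarrow> dxi nrm \<gamma> a a = 0"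
  by (simp add: dxi_def is_norm_def)

lemma dxi_triangle:
  assumes "is_norm nrm" "\<gamma> \<ge> 0"
  shows "dxi nrm \<gamma> a c \<le> dxi nrm \<gamma> a b + dxi nrm \<gamma> b c"
proof -
  have "nrm (fst a - fst c) \<le> nrm (fst a - fst b) + nrm (fst b - fst c)"
    using assms(1) unfolding is_norm_def by (metis diff_add_cancel add_diff_eq)
  moreover have "\<gamma> / 2 * \<bar>snd a - snd c\<bar> \<le> \<gamma> / 2 * \<bar>snd a - snd b\<bar> + \<gamma> / 2 * \<bar>snd b - snd c\<bar>"
    using assms(2) by (simp flip: distrib_left add: mult_left_mono)
  ultimately show ?thesis by (simp add: dxi_def)
qed

lemma add_powr_le:
  fixes a b p :: real
  assumes "a \<ge> 0" "b \<ge> 0" "p \<ge> 1"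
  shows "(a + b) powr p \<le> 2 powr (p - 1) * (a powr p + b powr p)"
proof (cases "a = 0 \<or> b = 0")
  case True
  have "1 \<le> 2 powr (p - 1)" using assms by (simp add: ge_one_powr_ge_zero)
  then show ?thesis using True assms
    by (auto intro!: mult_right_mono[of 1, simplified] simp: mult_le_cancel_right1)
next
  case False
  then have ab: "a > 0" "b > 0" using assms by auto
  have "((1/2) * a + (1 - 1/2) * b) powr p \<le> (1/2) * a powr p + (1 - 1/2) * b powr p"
    using convex_onD[OF powr_convex[OF assms(3)], of "1/2" a b] ab by simp
  then have mid: "((a + b) / 2) powr p \<le> (a powr p + b powr p) / 2"
    by (simp add: field_simps)
  have "(a + b) powr p = 2 powr p * ((a + b) / 2) powr p"
    using ab by (simp add: powr_divide)
  also have "\<dots> \<le> 2 powr p * ((a powr p + b powr p) / 2)"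
    by (intro mult_left_mono mid) simp
  also have "\<dots> = 2 powr (p - 1) * (a powr p + b powr p)" by (simp add: powr_diff)
  finally show ?thesis .
qed

lemma hfun_nonneg:
  assumes "\<xi> \<in> S" "f \<xi> \<ge> 0" "d \<xi> \<xi> = 0"
  shows "0 \<le> hfun S d p f lam \<xi>"
proof -
  have "ereal (f \<xi> - lam * d \<xi> \<xi> powr p) \<le> hfun S d p f lam \<xi>"
    unfolding hfun_def using assms(1) by (rule SUP_upper)
  then show ?thesis using assms(2,3) by simp (metis ereal_less_eq(5) order_trans)
qed

lemma hfun_le_at_growth_multiplier:
  assumes d_nonneg: "\<And>a b. d a b \<ge> 0" and d_triangle: "\<And>a b c. d a c \<le> d a b + d b c"
    and p: "p \<ge> 1" and C: "C \<ge> 0"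
    and growth: "\<forall>\<zeta>\<in>S. f \<zeta> \<le> C * (1 + d \<zeta> \<xi>\<^sub>0 powr p)"
    and r: "d \<xi> \<xi>\<^sub>0 \<le> r"
  shows "hfun S d p f (C * 2 powr (p - 1)) \<xi> \<le> ereal (C * (1 + 2 powr (p - 1) * r powr p))"
  unfolding hfun_def
proof (rule SUP_least)
  fix \<zeta> assume "\<zeta> \<in> S"
  then have "f \<zeta> \<le> C * (1 + d \<zeta> \<xi>\<^sub>0 powr p)" using growth by blast
  also have "d \<zeta> \<xi>\<^sub>0 powr p \<le> (d \<zeta> \<xi> + d \<xi> \<xi>\<^sub>0) powr p"
    using d_triangle d_nonneg p by (intro powr_mono2) auto
  also have "\<dots> \<le> 2 powr (p - 1) * (d \<zeta> \<xi> powr p + d \<xi> \<xi>\<^sub>0 powr p)"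
    using d_nonneg p by (intro add_powr_le) auto
  also have "d \<xi> \<xi>\<^sub>0 powr p \<le> r powr p"
    using r d_nonneg p by (intro powr_mono2) auto
  finally have "f \<zeta> \<le> C * (1 + 2 powr (p - 1) * (d \<zeta> \<xi> powr p + r powr p))"
    using C by (simp add: mult_left_mono)
  then show "ereal (f \<zeta> - C * 2 powr (p - 1) * d \<zeta> \<xi> powr p) \<le> ereal (C * (1 + 2 powr (p - 1) * r powr p))"
    by (simp add: algebra_simps)
qed

lemma INF_eq_INF_subset:
  fixes f :: "'a \<Rightarrow> 'b::complete_lattice"
  assumes "x\<^sub>0 \<in> T" "T \<subseteq> S" "\<And>x. x \<in> S - T \<Longrightarrow> f x\<^sub>0 \<le> f x"
  shows "(INF x\<in>S. f x) = (INF x\<in>T. f x)"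
proof (rule antisym)
  show "(INF x\<in>S. f x) \<le> (INF x\<in>T. f x)" using assms(2) by (rule INF_superset_mono) simp
  have "(INF x\<in>T. f x) \<le> f x" if "x \<in> S" for x
    using that assms by (cases "x \<in> T") (auto intro: INF_lower2)
  then show "(INF x\<in>T. f x) \<le> (INF x\<in>S. f x)" by (rule INF_greatest)
qed

lemma ereal_mult_INF_le_INF:
  assumes "c \<ge> 0" "\<And>x. x \<in> T \<Longrightarrow> ereal c * f x \<le> g x"
  shows "ereal c * (INF x\<in>T. f x) \<le> (INF x\<in>T. g x)"
proof (rule INF_greatest)
  fix x assume "x \<in> T"
  then have "ereal c * (INF x\<in>T. f x) \<le> ereal c * f x"
    using assms(1) by (intro ereal_mult_left_mono INF_lower) auto
  also have "\<dots> \<le> g x" using \<open>x \<in> T\<close> by (rule assms(2))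
  finally show "ereal c * (INF x\<in>T. f x) \<le> g x" .
qed

lemma INF_le_ereal_mult_INF:
  assumes "c > 0" "\<And>x. x \<in> T \<Longrightarrow> g x \<le> ereal c * f x"
  shows "(INF x\<in>T. g x) \<le> ereal c * (INF x\<in>T. f x)"
proof -
  have "ereal (1 / c) * g x \<le> f x" if "x \<in> T" for x
  proof -
    have "ereal (1 / c) * g x \<le> ereal (1 / c) * (ereal c * f x)"
      using assms that by (intro ereal_mult_left_mono) auto
    then show ?thesis using assms(1) by (simp flip: mult.assoc)
  qed
  then have "ereal (1 / c) * (INF x\<in>T. g x) \<le> (INF x\<in>T. f x)"
    using assms(1) by (intro ereal_mult_INF_le_INF) auto
  then have "ereal c * (ereal (1 / c) * (INF x\<in>T. g x)) \<le> ereal c * (INF x\<in>T. f x)"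
    using assms(1) by (intro ereal_mult_left_mono) auto
  then show ?thesis using assms(1) by (simp flip: mult.assoc)
qed

lemma INF_dual_objective_eq_INF_interval:
  fixes A :: "real \<Rightarrow> ereal" and k :: ereal
  assumes s: "s > 0" and A_nonneg: "\<And>lam. 0 \<le> A lam"
    and A_below: "\<And>lam. ereal lam < k \<Longrightarrow> A lam = \<infinity>"
    and witness: "0 \<le> lam\<^sub>0" "A lam\<^sub>0 \<le> ereal b" "lam\<^sub>0 * s + b \<le> \<tau> * s"
  shows "(INF lam\<in>{0..}. ereal (lam * s) + A lam)
    = (INF lam\<in>{lam. 0 \<le> lam \<and> k \<le> ereal lam \<and> lam \<le> \<tau>}. ereal (lam * s) + A lam)"
proof (rule INF_eq_INF_subset)
  have "0 \<le> ereal b" using A_nonneg[of lam\<^sub>0] witness(2) by (rule order_trans)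
  then have "lam\<^sub>0 * s \<le> \<tau> * s" using witness(3) by simp
  then have "lam\<^sub>0 \<le> \<tau>" using s by simp
  moreover have "k \<le> ereal lam\<^sub>0" using A_below[of lam\<^sub>0] witness(2) by (cases "ereal lam\<^sub>0 < k") auto
  ultimately show "lam\<^sub>0 \<in> {lam. 0 \<le> lam \<and> k \<le> ereal lam \<and> lam \<le> \<tau>}" using witness(1) by simp
next
  fix lam assume lam: "lam \<in> {0..} - {lam. 0 \<le> lam \<and> k \<le> ereal lam \<and> lam \<le> \<tau>}"
  show "ereal (lam\<^sub>0 * s) + A lam\<^sub>0 \<le> ereal (lam * s) + A lam"
  proof (cases "ereal lam < k")
    case False
    then have "\<tau> * s \<le> lam * s" using lam s by auto
    have "ereal (lam\<^sub>0 * s) + A lam\<^sub>0 \<le> ereal (lam\<^sub>0 * s + b)"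
      using add_left_mono[OF witness(2), of "ereal (lam\<^sub>0 * s)"] by simp
    also have "\<dots> \<le> ereal (lam * s)" using witness(3) \<open>\<tau> * s \<le> lam * s\<close> by simp
    also have "\<dots> \<le> ereal (lam * s) + A lam" using A_nonneg[of lam] add_left_mono by fastforce
    finally show ?thesis .
  qed (simp add: A_below)
qed auto

lemma INF_dual_objective_sandwich:
  fixes A B :: "real \<Rightarrow> ereal" and k :: ereal
  assumes s: "s > 0" and eps: "0 \<le> \<epsilon>" "\<epsilon> \<le> 1"
    and A_nonneg: "\<And>lam. 0 \<le> A lam" and B_nonneg: "\<And>lam. 0 \<le> B lam"
    and A_below: "\<And>lam. ereal lam < k \<Longrightarrow> A lam = \<infinity>"
    and B_below: "\<And>lam. ereal lam < k \<Longrightarrow> B lam = \<infinity>"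
    and witness: "0 \<le> lam\<^sub>0" "A lam\<^sub>0 \<le> ereal b" "B lam\<^sub>0 \<le> ereal b" "lam\<^sub>0 * s + b \<le> \<tau> * s"
    and sandwich: "\<And>lam. k \<le> ereal lam \<Longrightarrow> lam \<le> \<tau> \<Longrightarrow>
        ereal (1 - \<epsilon>) * A lam \<le> B lam \<and> B lam \<le> ereal (1 + \<epsilon>) * A lam"
  shows "ereal (1 - \<epsilon>) * (INF lam\<in>{0..}. ereal (lam * s) + A lam) \<le> (INF lam\<in>{0..}. ereal (lam * s) + B lam)
    \<and> (INF lam\<in>{0..}. ereal (lam * s) + B lam) \<le> ereal (1 + \<epsilon>) * (INF lam\<in>{0..}. ereal (lam * s) + A lam)"
proof -
  define T where "T = {lam. 0 \<le> lam \<and> k \<le> ereal lam \<and> lam \<le> \<tau>}"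
  have lower: "ereal (1 - \<epsilon>) * (ereal (lam * s) + A lam) \<le> ereal (lam * s) + B lam" if "lam \<in> T" for lam
  proof -
    have "ereal (1 - \<epsilon>) * (ereal (lam * s) + A lam) = ereal ((1 - \<epsilon>) * (lam * s)) + ereal (1 - \<epsilon>) * A lam"
      using A_nonneg[of lam] by (simp add: ereal_distrib_left)
    also have "\<dots> \<le> ereal (lam * s) + B lam"
      using that sandwich[of lam] eps s by (intro add_mono) (auto simp: T_def mult_left_le_one_le)
    finally show ?thesis .
  qed
  have upper: "ereal (lam * s) + B lam \<le> ereal (1 + \<epsilon>) * (ereal (lam * s) + A lam)" if "lam \<in> T" for lam
  proof -
    have "ereal (lam * s) + B lam \<le> ereal ((1 + \<epsilon>) * (lam * s)) + ereal (1 + \<epsilon>) * A lam"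
      using that sandwich[of lam] eps s by (intro add_mono) (auto simp: T_def algebra_simps)
    also have "\<dots> = ereal (1 + \<epsilon>) * (ereal (lam * s) + A lam)"
      using A_nonneg[of lam] by (simp add: ereal_distrib_left)
    finally show ?thesis .
  qed
  have "(INF lam\<in>{0..}. ereal (lam * s) + A lam) = (INF lam\<in>T. ereal (lam * s) + A lam)"
    "(INF lam\<in>{0..}. ereal (lam * s) + B lam) = (INF lam\<in>T. ereal (lam * s) + B lam)"
    unfolding T_def using s A_nonneg B_nonneg A_below B_below witness
    by (auto intro!: INF_dual_objective_eq_INF_interval)
  then show ?thesis
    using ereal_mult_INF_le_INF[of "1 - \<epsilon>" T, OF _ lower] INF_le_ereal_mult_INF[of "1 + \<epsilon>" T, OF _ upper] eps
    by simp
qed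

lemma INF_mass_average_sandwich:
  fixes g :: "real \<Rightarrow> nat \<Rightarrow> ereal" and k :: ereal
  assumes s: "s > 0" and eps: "0 \<le> \<epsilon>" "\<epsilon> \<le> 1"
    and u: "\<forall>i<n. u i \<ge> 0" "(\<Sum>i<n. u i) = 1" and v: "\<forall>i<n. v i \<ge> 0" "(\<Sum>i<n. v i) = 1"
    and g_nonneg: "\<And>lam. \<forall>i<n. 0 \<le> g lam i"
    and g_below: "\<And>lam. ereal lam < k \<Longrightarrow> \<forall>i<n. g lam i = \<infinity>"
    and witness: "0 \<le> lam\<^sub>0" "\<forall>i<n. g lam\<^sub>0 i \<le> ereal b" "lam\<^sub>0 * s + b \<le> \<tau> * s"
    and sandwich: "\<And>lam. k \<le> ereal lam \<Longrightarrow> lam \<le> \<tau> \<Longrightarrow>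
        ereal (1 - \<epsilon>) * (\<Sum>i<n. ereal (u i) * g lam i) \<le> (\<Sum>i<n. ereal (v i) * g lam i)
        \<and> (\<Sum>i<n. ereal (v i) * g lam i) \<le> ereal (1 + \<epsilon>) * (\<Sum>i<n. ereal (u i) * g lam i)"
  shows "ereal (1 - \<epsilon>) * (INF lam\<in>{0..}. ereal (lam * s) + (\<Sum>i<n. ereal (u i) * g lam i))
      \<le> (INF lam\<in>{0..}. ereal (lam * s) + (\<Sum>i<n. ereal (v i) * g lam i))
    \<and> (INF lam\<in>{0..}. ereal (lam * s) + (\<Sum>i<n. ereal (v i) * g lam i))
      \<le> ereal (1 + \<epsilon>) * (INF lam\<in>{0..}. ereal (lam * s) + (\<Sum>i<n. ereal (u i) * g lam i))"
proof (rule INF_dual_objective_sandwich[OF s eps _ _ _ _ witness(1) _ _ witness(3) sandwich])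
  show "0 \<le> (\<Sum>i<n. ereal (u i) * g lam i)" "0 \<le> (\<Sum>i<n. ereal (v i) * g lam i)" for lam
    using u v g_nonneg by (auto intro: mass_average_nonneg)
  show "(\<Sum>i<n. ereal (u i) * g lam i) = \<infinity>" "(\<Sum>i<n. ereal (v i) * g lam i) = \<infinity>"
    if "ereal lam < k" for lam
    using mass_average_eq_PInf[OF u g_below[OF that]] mass_average_eq_PInf[OF v g_below[OF that]] by auto
  show "(\<Sum>i<n. ereal (u i) * g lam\<^sub>0 i) \<le> ereal b" "(\<Sum>i<n. ereal (v i) * g lam\<^sub>0 i) \<le> ereal b"
    using u v witness(2) by (auto intro: mass_average_le)
qed auto

lemma sum_divide_ereal_of_nat:
  fixes h :: "nat \<Rightarrow> ereal"
  assumes "\<forall>i<n. 0 \<le> h i"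
  shows "(\<Sum>i<n. h i) / ereal (real n) = (\<Sum>i<n. ereal (1 / real n) * h i)"
proof (cases "n = 0")
  case False
  then have "(\<Sum>i<n. h i) / ereal (real n) = (\<Sum>i<n. h i) * ereal (1 / real n)"
    by (simp add: divide_ereal_def inverse_eq_divide)
  also have "\<dots> = (\<Sum>i<n. h i * ereal (1 / real n))"
    using assms by (intro sum_ereal_left_distrib) auto
  finally show ?thesis by (simp add: mult.commute)
qed simp

theorem theorem1:
  fixes nrm :: "real^'m \<Rightarrow> real" and \<gamma> :: real
    and X :: "(real^'m) set" and Y :: "real set"
    and p \<sigma> \<epsilon> :: real and n :: nat
    and xs :: "nat \<Rightarrow> (real^'m) \<times> real" and xi0 :: "(real^'m) \<times> real"
    and loss :: "real^'d \<Rightarrow> (real^'m) \<times> real \<Rightarrow> real"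
    and \<Theta> :: "(real^'d) set" and C :: "real^'d \<Rightarrow> real"
    and w :: "nat \<Rightarrow> real"
    and \<Xi> d \<rho> \<tau> h H Ht \<kappa> Pn Pt R
  assumes Xi_def: "\<Xi> = X \<times> Y"
    and d_def: "d = dxi nrm \<gamma>"
    and rho_def: "\<rho> = Max ((\<lambda>i. d (xs i) xi0) ` {..<n})"
    and tau_def: "\<tau> = (\<lambda>\<theta>. C \<theta> * (2 powr (p - 1) + (1 + 2 powr (p - 1) * \<rho> powr p) / \<sigma> powr p))"
    and h_def: "h = (\<lambda>\<theta> lam xi. hfun \<Xi> d p (loss \<theta>) lam xi)"
    and H_def: "H = (\<lambda>\<theta> lam. (\<Sum>i<n. h \<theta> lam (xs i)) / ereal (real n))"
    and Ht_def: "Ht = (\<lambda>\<theta> lam. \<Sum>i<n. ereal (w i) * h \<theta> lam (xs i))"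
    and kappa_def: "\<kappa> = (\<lambda>\<theta>. kappa \<Xi> d p (loss \<theta>) xi0)"
    and Pn_def: "Pn = wmeas xs (\<lambda>i. 1 / real n) n"
    and Pt_def: "Pt = wmeas xs w n"
    and R_def: "R = (\<lambda>Q \<theta>. risk \<Xi> d p \<sigma> Q (loss \<theta>))"
    and norm: "is_norm nrm" and gamma: "\<gamma> > 0"
    and complete: "complete_wrt \<Xi> d"
    and p: "p \<ge> 1" and sigma: "\<sigma> > 0"
    and n: "n \<ge> 1" and data: "\<forall>i<n. xs i \<in> \<Xi>" and xi0: "xi0 \<in> \<Xi>"
    and loss_nonneg: "\<forall>\<theta>. \<forall>\<xi>\<in>\<Xi>. loss \<theta> \<xi> \<ge> 0"
    and loss_cont: "\<forall>\<theta>\<in>\<Theta>. continuous_wrt \<Xi> d (loss \<theta>)"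
    and C_cont: "continuous_on \<Theta> C" and C_pos: "\<forall>\<theta>\<in>\<Theta>. C \<theta> > 0"
    and growth: "\<forall>\<theta>\<in>\<Theta>. \<forall>\<xi>\<in>\<Xi>. loss \<theta> \<xi> \<le> C \<theta> * (1 + d \<xi> xi0 powr p)"
    and kappa_fin: "\<forall>\<theta>\<in>\<Theta>. \<forall>i<n. \<exists>k. \<kappa> \<theta> = ereal k \<and> h \<theta> k (xs i) < \<infinity>"
    and kappa_below: "\<forall>\<theta>\<in>\<Theta>. \<forall>i<n. \<forall>lam. ereal lam < \<kappa> \<theta> \<longrightarrow> h \<theta> lam (xs i) = \<infinity>"
    and duality: "\<forall>Q. prob_on \<Xi> Q \<and> (\<integral>\<^sup>+ \<xi>. ennreal (d \<xi> xi0 powr p) \<partial>Q) < \<infinity> \<longrightarrow>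
        (\<forall>\<theta>\<in>\<Theta>. R Q \<theta> = (INF lam\<in>{0::real..}. ereal (lam * \<sigma> powr p)
            + enn2ereal (\<integral>\<^sup>+ \<xi>. e2ennreal (h \<theta> lam \<xi>) \<partial>Q)))"
    and eps: "0 < \<epsilon>" "\<epsilon> < 1"
    and w_nonneg: "\<forall>i<n. w i \<ge> 0" and w_sum: "(\<Sum>i<n. w i) = 1"
    and coreset: "\<forall>\<theta>\<in>\<Theta>. \<forall>lam::real. \<kappa> \<theta> \<le> ereal lam \<and> lam \<le> \<tau> \<theta> \<longrightarrow>
        ereal (1 - \<epsilon>) * H \<theta> lam \<le> Ht \<theta> lam \<and> Ht \<theta> lam \<le> ereal (1 + \<epsilon>) * H \<theta> lam"
  shows "\<forall>\<theta>\<in>\<Theta>. ereal (1 - \<epsilon>) * R Pn \<theta> \<le> R Pt \<theta> \<and> R Pt \<theta> \<le> ereal (1 + \<epsilon>) * R Pn \<theta>"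
proof (intro ballI)
  fix \<theta> assume \<theta>: "\<theta> \<in> \<Theta>"
  show "ereal (1 - \<epsilon>) * R Pn \<theta> \<le> R Pt \<theta> \<and> R Pt \<theta> \<le> ereal (1 + \<epsilon>) * R Pn \<theta>"
  proof (cases "\<Xi> \<in> sets borel")
    case False
    then show ?thesis using eps by (simp add: R_def risk_def wball_eq_empty_if_not_borel bot_ereal_def)
  next
    case True
    define l0 where "l0 = C \<theta> * 2 powr (p - 1)"
    define b where "b = C \<theta> * (1 + 2 powr (p - 1) * \<rho> powr p)"
    have d_nonneg: "d a a' \<ge> 0" and d_triangle: "d a c \<le> d a a' + d a' c" for a a' c
      using norm gamma by (simp_all add: d_def dxi_nonneg dxi_triangle)
    have h_nonneg: "\<forall>i<n. 0 \<le> h \<theta> lam (xs i)" for lam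
      using data loss_nonneg norm by (auto simp: h_def d_def dxi_self intro: hfun_nonneg)
    have h_l0: "h \<theta> l0 (xs i) \<le> ereal b" if "i < n" for i
      unfolding h_def l0_def b_def
    proof (rule hfun_le_at_growth_multiplier[OF d_nonneg d_triangle p])
      show "d (xs i) xi0 \<le> \<rho>" unfolding rho_def using that by (intro Max_ge) auto
    qed (use growth \<theta> C_pos less_imp_le in auto)
    have R_wmeas: "R (wmeas xs u n) \<theta> = (INF lam\<in>{0..}. ereal (lam * \<sigma> powr p) + (\<Sum>i<n. ereal (u i) * h \<theta> lam (xs i)))"
      if u: "\<forall>i<n. u i \<ge> 0" "(\<Sum>i<n. u i) = 1" for u
    proof -
      have "prob_on \<Xi> (wmeas xs u n)" using prob_on_wmeas[OF u True] data by blast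
      moreover have "(\<integral>\<^sup>+ \<xi>. ennreal (d \<xi> xi0 powr p) \<partial>wmeas xs u n) < \<infinity>"
        by (simp add: nn_integral_wmeas ennreal_mult_less_top)
      ultimately show ?thesis
        using duality \<theta> u h_nonneg by (simp add: nn_integral_wmeas_ereal)
    qed
    have uniform: "\<forall>i<n. 1 / real n \<ge> 0" "(\<Sum>i<n. 1 / real n) = 1" using n by auto
    have H_avg: "H \<theta> lam = (\<Sum>i<n. ereal (1 / real n) * h \<theta> lam (xs i))" for lam
      unfolding H_def using h_nonneg by (rule sum_divide_ereal_of_nat)
    have "\<tau> \<theta> * \<sigma> powr p = l0 * \<sigma> powr p + b"
      using sigma by (simp add: tau_def l0_def b_def field_simps)
    then show ?thesis
      unfolding Pn_def Pt_def R_wmeas[OF uniform] R_wmeas[OF w_nonneg w_sum]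
      using coreset \<theta> C_pos h_nonneg h_l0 kappa_below sigma eps
      by (intro INF_mass_average_sandwich[OF _ _ _ uniform w_nonneg w_sum,
            where k = "\<kappa> \<theta>" and lam\<^sub>0 = l0 and \<tau> = "\<tau> \<theta>"])
        (auto simp: H_avg Ht_def l0_def)
  qed
qed

end
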